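(* Let $N$ be a finite-dimensional Hilbert space and let $S$ be the operator in $\ell_2(\mathbb{Z},N)$ defined below. A fundamental symmetry $J$ in $\ell_2(\mathbb{Z},N)$ commutes with $S$ if and only if there exist fundamental symmetries $J_-$, $J_+$ in $N$ such that for every $(x_k)_{k\in\mathbb{Z}}\in\ell_2(\mathbb{Z},N)$, $(J(x_k))_k=J_-x_k$ for $k\le 0$ and $(J(x_k))_k=J_+x_k$ for $k\ge 1$.
   Context: Let $A$ be the operator in $\ell_2(\mathbb{Z},N)$ with domain $\mathcal{D}(A)$ consisting of all sequences $f=(f_k)_{k\in\mathbb{Z}}$ of the form $f_k=x_{k-1}-x_k$ with $(x_k)\in\ell_2(\mathbb{Z},N)$, acting by $(Af)_k=i(x_{k-1}+x_k)$. Let $S$ be the restriction of $A$ to the set of those $f\in\mathcal{D}(A)$ for which $x_0=0$. A fundamental symmetry is a bounded operator $J$ with $J=J^*$, $J^2=I$. "$J$ commutes with $S$" means $J\mathcal{D}(S)\subset\mathcal{D}(S)$ and $JSu=SJu$ for all $u\in\mathcal{D}(S)$. *)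

theory Defs
  imports "HOL-Analysis.Analysis"
begin

text \<open>The finite-dimensional complex Hilbert space N is modelled as complex^'n
  with its standard inner product (every finite-dimensional Hilbert space is
  unitarily equivalent to such a space).\<close>

definition cinner :: "complex^'n \<Rightarrow> complex^'n \<Rightarrow> complex" where
  "cinner x y = (\<Sum>i\<in>UNIV. x$i * cnj (y$i))"

definition fsym_N :: "(complex^'n \<Rightarrow> complex^'n) \<Rightarrow> bool" where
  "fsym_N T \<longleftrightarrow>
     (\<forall>x y. T (x + y) = T x + T y) \<and> (\<forall>c x. T (c *s x) = c *s T x) \<and>
     (\<forall>x y. cinner (T x) y = cinner x (T y)) \<and> (\<forall>x. T (T x) = x)"

definition l2 :: "(int \<Rightarrow> complex^'n) set" where
  "l2 = {x. (\<lambda>k. (norm (x k))\<^sup>2) summable_on UNIV}"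

definition l2inner :: "(int \<Rightarrow> complex^'n) \<Rightarrow> (int \<Rightarrow> complex^'n) \<Rightarrow> complex" where
  "l2inner f g = infsum (\<lambda>k. cinner (f k) (g k)) UNIV"

definition l2norm :: "(int \<Rightarrow> complex^'n) \<Rightarrow> real" where
  "l2norm f = sqrt (infsum (\<lambda>k. (norm (f k))\<^sup>2) UNIV)"

definition fsym_l2 :: "((int \<Rightarrow> complex^'n) \<Rightarrow> (int \<Rightarrow> complex^'n)) \<Rightarrow> bool" where
  "fsym_l2 J \<longleftrightarrow>
     (\<forall>f\<in>l2. J f \<in> l2) \<and>
     (\<forall>f\<in>l2. \<forall>g\<in>l2. J (\<lambda>k. f k + g k) = (\<lambda>k. J f k + J g k)) \<and>
     (\<forall>f\<in>l2. \<forall>c. J (\<lambda>k. c *s f k) = (\<lambda>k. c *s J f k)) \<and>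
     (\<exists>C. \<forall>f\<in>l2. l2norm (J f) \<le> C * l2norm f) \<and>
     (\<forall>f\<in>l2. \<forall>g\<in>l2. l2inner (J f) g = l2inner f (J g)) \<and>
     (\<forall>f\<in>l2. J (J f) = f)"

definition diffseq :: "(int \<Rightarrow> complex^'n) \<Rightarrow> (int \<Rightarrow> complex^'n)" where
  "diffseq x = (\<lambda>k. x (k - 1) - x k)"

definition domA :: "(int \<Rightarrow> complex^'n) set" where
  "domA = {f. \<exists>x\<in>l2. f = diffseq x}"

definition opA :: "(int \<Rightarrow> complex^'n) \<Rightarrow> (int \<Rightarrow> complex^'n)" where
  "opA f = (let x = (THE x. x \<in> l2 \<and> f = diffseq x) in (\<lambda>k. \<i> *s (x (k - 1) + x k)))"

definition domS :: "(int \<Rightarrow> complex^'n) set" where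
  "domS = {f. \<exists>x\<in>l2. x 0 = 0 \<and> f = diffseq x}"

definition opS :: "(int \<Rightarrow> complex^'n) \<Rightarrow> (int \<Rightarrow> complex^'n)" where
  "opS f = opA f"

definition commutes_S :: "((int \<Rightarrow> complex^'n) \<Rightarrow> (int \<Rightarrow> complex^'n)) \<Rightarrow> bool" where
  "commutes_S J \<longleftrightarrow> (\<forall>u\<in>domS. J u \<in> domS) \<and> (\<forall>u\<in>domS. J (opS u) = opS (J u))"

end

theory Submission imports Defs begin

text \<open>For u = diffseq x with x(0) = 0 one has x = -(\<i>/2) S u - u/2, and the shifted
  sequence (x(k-1)) equals -(\<i>/2) S u + u/2. Hence a J commuting with S maps
  {x. x(0) = 0} into itself and commutes with the right shift there. Self-adjointness then
  forces J to map a sequence concentrated at one index to one concentrated at the same index,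
  and the shift carries this diagonal action from index 0 to all k \<le> 0 and from index 1 to
  all k \<ge> 1. Conversely, a block-diagonal J preserves x(0) = 0 and commutes with the shift,
  because the shift only crosses between the two blocks at index 0, where x vanishes.\<close>

lemma cinner_diff_left: "cinner (x - y) z = cinner x z - cinner y z"
  unfolding cinner_def by (simp add: left_diff_distrib sum_subtractf)

lemma cinner_self_eq_zero: "cinner x x = 0 \<Longrightarrow> x = 0"
proof -
  assume "cinner x x = 0"
  moreover have "x$i * cnj (x$i) = of_real ((cmod (x$i))\<^sup>2)" for i
    by (metis complex_norm_square of_real_power)
  then have "cinner x x = of_real (\<Sum>i\<in>UNIV. (cmod (x$i))\<^sup>2)"
    unfolding cinner_def of_real_sum by simp
  ultimately have "(\<Sum>i\<in>UNIV. (cmod (x$i))\<^sup>2) = 0"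
    by (simp only: of_real_eq_0_iff)
  then show "x = 0"
    by (simp add: sum_nonneg_eq_0_iff vec_eq_iff)
qed

lemma cinner_zero_left [simp]: "cinner 0 y = 0"
  unfolding cinner_def by simp

lemma cinner_zero_right [simp]: "cinner x 0 = 0"
  unfolding cinner_def by simp

lemma cinner_left_eqI: "(\<And>w. cinner a w = cinner b w) \<Longrightarrow> a = b"
  using cinner_self_eq_zero[of "a - b"] by (simp add: cinner_diff_left)

lemma fsym_N_add: "fsym_N T \<Longrightarrow> T (a + b) = T a + T b"
  unfolding fsym_N_def by blast

lemma fsym_N_scaleR: "fsym_N T \<Longrightarrow> T (c *s a) = c *s T a"
  unfolding fsym_N_def by blast

lemma fsym_N_zero: "fsym_N T \<Longrightarrow> T 0 = 0"
  using fsym_N_add[of T 0 0] by simp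

lemma fsym_N_diff: "fsym_N T \<Longrightarrow> T (a - b) = T a - T b"
  using fsym_N_add[of T "a - b" b] by (simp add: algebra_simps)

lemma norm_vector_scalar_mult: "norm (c *s (v::complex^'n)) = cmod c * norm v"
proof -
  have "norm (c *s v) = sqrt ((cmod c)\<^sup>2 * (\<Sum>i\<in>UNIV. (cmod (v$i))\<^sup>2))"
    unfolding norm_vec_def L2_set_def
    by (simp add: norm_mult power_mult_distrib sum_distrib_left)
  then show ?thesis
    unfolding norm_vec_def L2_set_def by (simp add: real_sqrt_mult)
qed

lemma l2_lincomb:
  assumes "x \<in> l2" "y \<in> l2"
  shows "(\<lambda>k. a *s x k + b *s y k) \<in> l2"
proof -
  have "(\<lambda>k. 2 * (cmod a)\<^sup>2 * (norm (x k))\<^sup>2 + 2 * (cmod b)\<^sup>2 * (norm (y k))\<^sup>2) summable_on UNIV"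
    using assms unfolding l2_def by (intro summable_on_add summable_on_cmult_right) auto
  moreover have "(norm (a *s x k + b *s y k))\<^sup>2
      \<le> 2 * (cmod a)\<^sup>2 * (norm (x k))\<^sup>2 + 2 * (cmod b)\<^sup>2 * (norm (y k))\<^sup>2" for k
  proof -
    have sq: "(p + q)\<^sup>2 \<le> 2 * p\<^sup>2 + 2 * q\<^sup>2" for p q :: real
      using zero_le_power2[of "p - q"] by (simp add: power2_eq_square algebra_simps)
    have "norm (a *s x k + b *s y k) \<le> cmod a * norm (x k) + cmod b * norm (y k)"
      using norm_triangle_ineq[of "a *s x k" "b *s y k"] by (simp add: norm_vector_scalar_mult)
    then have "(norm (a *s x k + b *s y k))\<^sup>2 \<le> (cmod a * norm (x k) + cmod b * norm (y k))\<^sup>2"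
      by (simp add: power_mono)
    also have "\<dots> \<le> 2 * (cmod a)\<^sup>2 * (norm (x k))\<^sup>2 + 2 * (cmod b)\<^sup>2 * (norm (y k))\<^sup>2"
      using sq[of "cmod a * norm (x k)" "cmod b * norm (y k)"] by (simp add: power_mult_distrib)
    finally show ?thesis .
  qed
  ultimately show ?thesis
    unfolding l2_def by (auto intro: summable_on_comparison_test)
qed

lemma l2_diff: "x \<in> l2 \<Longrightarrow> y \<in> l2 \<Longrightarrow> (\<lambda>k. x k - y k) \<in> l2"
  using l2_lincomb[of x y 1 "-1"] by simp

lemma l2_shift:
  assumes "x \<in> l2" shows "(\<lambda>k. x (k + c)) \<in> l2"
proof -
  have "bij_betw (\<lambda>k::int. k + c) UNIV UNIV"
    by (rule bij_betwI[where g="\<lambda>k. k - c"]) auto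
  then show ?thesis
    using assms unfolding l2_def using summable_on_reindex_bij_betw[of _ UNIV UNIV "\<lambda>k. (norm (x k))\<^sup>2"]
    by simp
qed

lemma l2_shift_right: "x \<in> l2 \<Longrightarrow> (\<lambda>k. x (k - 1)) \<in> l2"
  using l2_shift[of x "-1"] by simp

lemma diffseq_l2: "x \<in> l2 \<Longrightarrow> diffseq x \<in> l2"
  unfolding diffseq_def by (intro l2_diff l2_shift_right)

lemma l2_shift_sum: "x \<in> l2 \<Longrightarrow> (\<lambda>k. \<i> *s (x (k - 1) + x k)) \<in> l2"
  using l2_lincomb[OF l2_shift_right, of x x "\<i>" "\<i>"] by (simp add: vector_add_ldistrib)

lemma l2_shift_invariant_eq_zero:
  assumes "d \<in> l2" and shift: "\<And>k. d (k - 1) = d k"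
  shows "d = (\<lambda>_. 0)"
proof -
  have const: "d k = d 0" for k
  proof (induction k rule: int_induct[where k=0])
    case (step1 i) then show ?case using shift[of "i + 1"] by simp
  next
    case (step2 i) then show ?case using shift[of i] by simp
  qed simp
  have "(\<lambda>k. (norm (d k))\<^sup>2) = (\<lambda>_::int. (norm (d 0))\<^sup>2)"
    by (subst const) (rule refl)
  then have "(\<lambda>_::int. (norm (d 0))\<^sup>2) summable_on UNIV"
    using assms(1) unfolding l2_def by simp
  then have "d 0 = 0"
    using infsum_diverge_constant[of "UNIV::int set" "(norm (d 0))\<^sup>2"] infinite_UNIV_int
    by fastforce
  then show ?thesis
    by (intro ext) (metis const)
qed

lemma diffseq_inj_on_l2:
  assumes "x \<in> l2" "y \<in> l2" "diffseq x = diffseq y"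
  shows "x = y"
proof -
  have "(\<lambda>k. x k - y k) = (\<lambda>_. 0)"
  proof (rule l2_shift_invariant_eq_zero)
    show "(\<lambda>k. x k - y k) \<in> l2" using assms(1,2) by (rule l2_diff)
    show "x (k - 1) - y (k - 1) = x k - y k" for k
      using fun_cong[OF assms(3), of k] unfolding diffseq_def by (simp add: algebra_simps)
  qed
  then show ?thesis
    by (simp add: fun_eq_iff)
qed

lemma opS_diffseq: "x \<in> l2 \<Longrightarrow> opS (diffseq x) = (\<lambda>k. \<i> *s (x (k - 1) + x k))"
  unfolding opS_def opA_def
  by (subst the_equality[of _ x]) (auto dest: diffseq_inj_on_l2)

definition delta_seq :: "int \<Rightarrow> complex^'n \<Rightarrow> int \<Rightarrow> complex^'n" where
  "delta_seq j v = (\<lambda>m. if m = j then v else 0)"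

lemma delta_seq_l2: "delta_seq j v \<in> l2"
  unfolding l2_def delta_seq_def mem_Collect_eq
  by (rule finite_nonzero_values_imp_summable_on) (rule finite_subset[of _ "{j}"], auto)

lemma l2inner_delta_seq_right: "l2inner f (delta_seq j w) = cinner (f j) w"
  unfolding l2inner_def delta_seq_def
  by (subst infsum_cong_neutral[where T="{j}" and g="\<lambda>_. cinner (f j) w"]) auto

lemma l2inner_delta_seq_left: "l2inner (delta_seq j w) g = cinner w (g j)"
  unfolding l2inner_def delta_seq_def
  by (subst infsum_cong_neutral[where T="{j}" and g="\<lambda>_. cinner w (g j)"]) auto

lemma delta_seq_eq_iff: "delta_seq j v = delta_seq j w \<longleftrightarrow> v = w"
  unfolding delta_seq_def by (metis (full_types))

lemma shift_right_eq_delta_seq_iff: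
  "(\<lambda>m. f (m - 1)) = delta_seq (k + 1) w \<longleftrightarrow> f = delta_seq k w"
proof
  assume "(\<lambda>m. f (m - 1)) = delta_seq (k + 1) w"
  from fun_cong[OF this, of "m + 1" for m] show "f = delta_seq k w"
    unfolding delta_seq_def by auto
qed (auto simp: delta_seq_def)

lemma fsym_l2_l2: "fsym_l2 J \<Longrightarrow> f \<in> l2 \<Longrightarrow> J f \<in> l2"
  unfolding fsym_l2_def by blast

lemma fsym_l2_selfadjoint:
  "fsym_l2 J \<Longrightarrow> f \<in> l2 \<Longrightarrow> g \<in> l2 \<Longrightarrow> l2inner (J f) g = l2inner f (J g)"
  unfolding fsym_l2_def by blast

lemma fsym_l2_involution: "fsym_l2 J \<Longrightarrow> f \<in> l2 \<Longrightarrow> J (J f) = f"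
  unfolding fsym_l2_def by blast

lemma fsym_l2_lincomb:
  assumes "fsym_l2 J" "f \<in> l2" "g \<in> l2"
  shows "J (\<lambda>k. a *s f k + b *s g k) = (\<lambda>k. a *s J f k + b *s J g k)"
proof -
  have "(\<lambda>k. a *s f k) \<in> l2" "(\<lambda>k. b *s g k) \<in> l2"
    using l2_lincomb[OF assms(2,3), of a 0] l2_lincomb[OF assms(2,3), of 0 b] by simp_all
  then show ?thesis using assms unfolding fsym_l2_def by simp
qed

text \<open>If J maps the sequences vanishing at j to sequences vanishing at j, then, J being
  self-adjoint, the complementary subspace of sequences concentrated at j is invariant too.\<close>

lemma fsym_l2_delta_seq_local:
  assumes J: "fsym_l2 J" and vanish: "\<And>x. x \<in> l2 \<Longrightarrow> x j = 0 \<Longrightarrow> J x j = 0"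
  shows "J (delta_seq j v) = delta_seq j (J (delta_seq j v) j)"
proof
  fix m
  show "J (delta_seq j v) m = delta_seq j (J (delta_seq j v) j) m"
  proof (cases "m = j")
    case False
    define w where "w = J (delta_seq j v) m"
    have "cinner w w = l2inner (J (delta_seq j v)) (delta_seq m w)"
      by (simp add: l2inner_delta_seq_right w_def)
    also have "\<dots> = l2inner (delta_seq j v) (J (delta_seq m w))"
      using J by (simp add: fsym_l2_selfadjoint delta_seq_l2)
    also have "\<dots> = cinner v (J (delta_seq m w) j)"
      by (simp add: l2inner_delta_seq_left)
    also have "J (delta_seq m w) j = 0"
      using False vanish[OF delta_seq_l2, of m w] by (simp add: delta_seq_def)
    finally show ?thesis
      using False cinner_self_eq_zero by (simp add: w_def delta_seq_def)
  qed (simp add: delta_seq_def)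
qed

lemma fsym_l2_diagonal_block:
  assumes J: "fsym_l2 J" and T: "\<And>v. J (delta_seq k v) = delta_seq k (T v)"
  shows "fsym_N T" "\<And>x. x \<in> l2 \<Longrightarrow> J x k = T (x k)"
proof -
  have Tv: "T v = J (delta_seq k v) k" for v
    using T by (simp add: delta_seq_def)
  have selfadjoint: "cinner (T v) w = cinner v (T w)" for v w
    using fsym_l2_selfadjoint[OF J delta_seq_l2 delta_seq_l2, of k v k w]
    by (simp add: l2inner_delta_seq_right l2inner_delta_seq_left Tv)
  have add: "T (v + w) = T v + T w" for v w
  proof -
    have "delta_seq k (v + w) = (\<lambda>m. 1 *s delta_seq k v m + 1 *s delta_seq k w m)"
      by (auto simp: delta_seq_def)
    then show ?thesis
      unfolding Tv using fsym_l2_lincomb[OF J delta_seq_l2 delta_seq_l2, of 1 k v 1 k w] by simp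
  qed
  have scalar: "T (c *s v) = c *s T v" for c v
  proof -
    have "delta_seq k (c *s v) = (\<lambda>m. c *s delta_seq k v m + 0 *s delta_seq k v m)"
      by (auto simp: delta_seq_def)
    then show ?thesis
      unfolding Tv using fsym_l2_lincomb[OF J delta_seq_l2 delta_seq_l2, of c k v 0 k v] by simp
  qed
  have "T (T v) = v" for v
    using fsym_l2_involution[OF J delta_seq_l2, of k v] by (simp add: T delta_seq_eq_iff)
  then show "fsym_N T"
    unfolding fsym_N_def using add scalar selfadjoint by blast
  show "J x k = T (x k)" if "x \<in> l2" for x
  proof (rule cinner_left_eqI)
    fix w
    have "cinner (J x k) w = l2inner (J x) (delta_seq k w)"
      by (simp add: l2inner_delta_seq_right)
    also have "\<dots> = l2inner x (J (delta_seq k w))"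
      using J that by (simp add: fsym_l2_selfadjoint delta_seq_l2)
    also have "\<dots> = cinner (T (x k)) w"
      by (simp add: T l2inner_delta_seq_right selfadjoint)
    finally show "cinner (J x k) w = cinner (T (x k)) w" .
  qed
qed

lemma block_diagonal_commutes_S:
  assumes J: "fsym_l2 J" and "fsym_N Jm" "fsym_N Jp"
    and block: "\<forall>x\<in>l2. \<forall>k. J x k = (if k \<le> 0 then Jm (x k) else Jp (x k))"
  shows "commutes_S J"
proof -
  define B where "B = (\<lambda>k::int. if k \<le> 0 then Jm else Jp)"
  have B: "fsym_N (B k)" for k using assms(2,3) unfolding B_def by simp
  have JB: "J x k = B k (x k)" if "x \<in> l2" for x k using block that unfolding B_def by simp
  have "J u \<in> domS \<and> J (opS u) = opS (J u)" if "u \<in> domS" for u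
  proof -
    obtain x where x: "x \<in> l2" "x 0 = 0" "u = diffseq x"
      using \<open>u \<in> domS\<close> unfolding domS_def by auto
    \<comment> \<open>B jumps only between indices 0 and 1, where x vanishes.\<close>
    have B_shift: "B k (x (k - 1)) = B (k - 1) (x (k - 1))" for k
    proof (cases "k = 1")
      case True
      then show ?thesis using x(2) fsym_N_zero[OF B] by simp
    qed (simp add: B_def)
    define y where "y = J x"
    have yk: "y k = B k (x k)" for k
      unfolding y_def using JB[OF x(1)] .
    have y: "y \<in> l2" "y 0 = 0"
      using fsym_l2_l2[OF J x(1)] x(2) fsym_N_zero[OF B] by (simp_all only: y_def[symmetric] yk)
    have Ju: "J u = diffseq y"
    proof (rule ext)
      fix k
      have "J u k = B k (diffseq x k)"
        unfolding x(3) by (rule JB[OF diffseq_l2[OF x(1)]])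
      also have "\<dots> = diffseq y k"
        unfolding diffseq_def fsym_N_diff[OF B] yk B_shift ..
      finally show "J u k = diffseq y k" .
    qed
    have "J (opS u) = opS (J u)"
    proof (rule ext)
      fix k
      have "J (opS u) k = B k (\<i> *s (x (k - 1) + x k))"
        unfolding x(3) opS_diffseq[OF x(1)] by (rule JB[OF l2_shift_sum[OF x(1)]])
      also have "\<dots> = opS (J u) k"
        unfolding Ju opS_diffseq[OF y(1)] fsym_N_add[OF B] fsym_N_scaleR[OF B] yk B_shift ..
      finally show "J (opS u) k = opS (J u) k" .
    qed
    moreover have "J u \<in> domS" unfolding domS_def using Ju y by blast
    ultimately show ?thesis by blast
  qed
  then show ?thesis unfolding commutes_S_def by blast
qed

lemma commutes_S_vanish_shift:
  assumes J: "fsym_l2 J" and C: "commutes_S J" and x: "x \<in> l2" "x 0 = 0"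
  shows "J x 0 = 0" "J (\<lambda>k. x (k - 1)) = (\<lambda>k. J x (k - 1))"
proof -
  define u where "u = diffseq x"
  define s where "s = (\<lambda>k. \<i> *s (x (k - 1) + x k))"
  have u: "u \<in> domS" "u \<in> l2" unfolding u_def domS_def using x diffseq_l2 by auto
  then obtain y where y: "y \<in> l2" "y 0 = 0" "J u = diffseq y"
    using C unfolding commutes_S_def domS_def by blast
  have s: "s \<in> l2" "J s = (\<lambda>k. \<i> *s (y (k - 1) + y k))"
    using C u y(3) l2_shift_sum[OF x(1)] opS_diffseq[OF x(1)] opS_diffseq[OF y(1)]
    unfolding commutes_S_def s_def u_def by auto
  have "J x = J (\<lambda>k. (-\<i>/2) *s s k + (-1/2) *s u k)"
    by (rule arg_cong[of _ _ J]) (auto simp: s_def u_def diffseq_def vec_eq_iff field_simps)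
  also have "\<dots> = y"
    unfolding fsym_l2_lincomb[OF J s(1) u(2)] s(2) y(3) diffseq_def
    by (auto simp: vec_eq_iff field_simps)
  finally have Jx: "J x = y" .
  have "J (\<lambda>k. x (k - 1)) = J (\<lambda>k. (-\<i>/2) *s s k + (1/2) *s u k)"
    by (rule arg_cong[of _ _ J]) (auto simp: s_def u_def diffseq_def vec_eq_iff field_simps)
  also have "\<dots> = (\<lambda>k. y (k - 1))"
    unfolding fsym_l2_lincomb[OF J s(1) u(2)] s(2) y(3) diffseq_def
    by (auto simp: vec_eq_iff field_simps)
  finally show "J (\<lambda>k. x (k - 1)) = (\<lambda>k. J x (k - 1))" using Jx by simp
  show "J x 0 = 0" using Jx y(2) by simp
qed

lemma commutes_S_vanish_at_1:
  assumes J: "fsym_l2 J" and C: "commutes_S J" and x: "x \<in> l2" "x 1 = 0"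
  shows "J x 1 = 0"
proof -
  have x': "(\<lambda>k. x (k + 1)) \<in> l2" "x (0 + 1) = 0" using l2_shift x by auto
  show ?thesis
    using commutes_S_vanish_shift[OF J C x'] fun_cong[of _ _ 1] by simp
qed

lemma commutes_S_delta_seq_shift:
  assumes J: "fsym_l2 J" and C: "commutes_S J" and "k \<noteq> 0"
  shows "J (delta_seq (k + 1) v) = delta_seq (k + 1) w \<longleftrightarrow> J (delta_seq k v) = delta_seq k w"
proof -
  have "(\<lambda>m. delta_seq k v (m - 1)) = delta_seq (k + 1) v"
    by (auto simp: delta_seq_def)
  moreover have "delta_seq k v 0 = 0" using \<open>k \<noteq> 0\<close> by (simp add: delta_seq_def)
  ultimately show ?thesis
    using commutes_S_vanish_shift(2)[OF J C delta_seq_l2] shift_right_eq_delta_seq_iff by metis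
qed

lemma commutes_S_delta_seq:
  assumes J: "fsym_l2 J" and C: "commutes_S J"
  shows "k \<le> 0 \<Longrightarrow> J (delta_seq k v) = delta_seq k (J (delta_seq 0 v) 0)"
    and "k \<ge> 1 \<Longrightarrow> J (delta_seq k v) = delta_seq k (J (delta_seq 1 v) 1)"
proof -
  have at_0: "J (delta_seq 0 v) = delta_seq 0 (J (delta_seq 0 v) 0)"
    using fsym_l2_delta_seq_local[OF J] commutes_S_vanish_shift(1)[OF J C] by blast
  have at_1: "J (delta_seq 1 v) = delta_seq 1 (J (delta_seq 1 v) 1)"
    using fsym_l2_delta_seq_local[OF J] commutes_S_vanish_at_1[OF J C] by blast
  show "k \<le> 0 \<Longrightarrow> J (delta_seq k v) = delta_seq k (J (delta_seq 0 v) 0)"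
  proof (induction k rule: int_le_induct)
    case (step i)
    then show ?case using commutes_S_delta_seq_shift[OF J C, of "i - 1"] by simp
  qed (fact at_0)
  show "k \<ge> 1 \<Longrightarrow> J (delta_seq k v) = delta_seq k (J (delta_seq 1 v) 1)"
  proof (induction k rule: int_ge_induct)
    case (step i)
    then show ?case using commutes_S_delta_seq_shift[OF J C, of i] by simp
  qed (fact at_1)
qed

theorem lemma3p2:
  fixes J :: "(int \<Rightarrow> complex^'n) \<Rightarrow> (int \<Rightarrow> complex^'n)"
  assumes "fsym_l2 J"
  shows "commutes_S J \<longleftrightarrow>
    (\<exists>Jm Jp :: complex^'n \<Rightarrow> complex^'n. fsym_N Jm \<and> fsym_N Jp \<and>
       (\<forall>x\<in>l2. \<forall>k. J x k = (if k \<le> 0 then Jm (x k) else Jp (x k))))"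
proof
  assume C: "commutes_S J"
  define Jm where "Jm = (\<lambda>v. J (delta_seq 0 v) 0)"
  define Jp where "Jp = (\<lambda>v. J (delta_seq 1 v) 1)"
  note minus = fsym_l2_diagonal_block[OF assms commutes_S_delta_seq(1)[OF assms C]]
  note plus = fsym_l2_diagonal_block[OF assms commutes_S_delta_seq(2)[OF assms C]]
  have "fsym_N Jm" "fsym_N Jp"
    using minus(1)[of 0] plus(1)[of 1] by (simp_all add: Jm_def Jp_def)
  moreover have "\<forall>x\<in>l2. \<forall>k. J x k = (if k \<le> 0 then Jm (x k) else Jp (x k))"
    using minus(2) plus(2) by (simp add: Jm_def Jp_def)
  ultimately show "\<exists>Jm Jp. fsym_N Jm \<and> fsym_N Jp \<and>
      (\<forall>x\<in>l2. \<forall>k. J x k = (if k \<le> 0 then Jm (x k) else Jp (x k)))"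
    by blast
qed (use block_diagonal_commutes_S[OF assms] in blast)

end
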